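(* Assume the network is regular, and let $j^*\in\mathcal E$ be a single child, i.e. there is $m^*\in\mathcal M$ with $m^*\vdash j^*$ such that $m^*\vdash j$ implies $j=j^*$. Then (a) such $m^*$ is unique; (b) $j^*$ influences no reaction: $j^*\not\leadsto j$ for every $j\in\mathcal E$ (including $j=j^*$); (c) the only metabolite influenced by $j^*$ is $m^*$: $j^*\leadsto m^*$ and $j^*\not\leadsto m'$ for every $m'\neq m^*$.
   Context: A reaction network consists of a finite set of metabolites $\mathcal M=\{1,\dots,M\}$ and a finite set of reactions $\mathcal E=\{1,\dots,E\}$. Each reaction $j$ has an input stoichiometric vector $y^j\in\mathbb R_{\ge0}^M$ and an output stoichiometric vector $\bar y^j\in\mathbb R_{\ge0}^M$. Write $m\vdash j$ iff $y^j_m\neq 0$. The stoichiometric matrix $S$ is the real $M\times E$ matrix whose $j$-th column is $S^j=\bar y^j-y^j$; it is assumed to have full rank $M$. The rate matrix $R=(r_{jm})$ is the $E\times M$ matrix whose entries $r_{jm}$ with $m\vdash j$ are independent indeterminates, and $r_{jm}=0$ whenever $m\not\vdash j$. "Nonzero algebraically" means nonzero as a polynomial/rational function in these indeterminates. The network is regular if $\det(SR)\ne0$ algebraically. Let $B=\begin{pmatrix}-\mathrm{id}_{\mathcal E}&R\\ S&0\end{pmatrix}$, a square matrix with rows and columns indexed by the disjoint union $\mathcal E\sqcup\mathcal M$; for a regular network it is invertible over the field of rational functions in the $r_{jm}$. For $\alpha\in\mathcal E\sqcup\mathcal M$ set $z^\alpha=-B^{-1}e_\alpha$, and write $\alpha\leadsto\beta$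 for $\beta\in\mathcal E\sqcup\mathcal M$ if $z^\alpha_\beta$ is nonzero algebraically. *)

theory Defs
  imports "HOL-Analysis.Analysis"
begin

text \<open>Reaction network with metabolites of finite type 'm and reactions of finite
type 'e.  Input stoichiometry y j m, output stoichiometry ybar j m.
A rate assignment r :: 'e \<Rightarrow> 'm \<Rightarrow> real gives real values to the
indeterminates r_jm; entries with m not consumed by j are forced to 0.\<close>

definition vdash :: "('e \<Rightarrow> 'm \<Rightarrow> real) \<Rightarrow> 'm \<Rightarrow> 'e \<Rightarrow> bool" where
  "vdash y m j \<longleftrightarrow> y j m \<noteq> 0"

definition stoich :: "('e::finite \<Rightarrow> 'm::finite \<Rightarrow> real) \<Rightarrow> ('e \<Rightarrow> 'm \<Rightarrow> real) \<Rightarrow> real^'e^'m" where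
  "stoich y ybar = (\<chi> m j. ybar j m - y j m)"

definition ratemat :: "('e::finite \<Rightarrow> 'm::finite \<Rightarrow> real) \<Rightarrow> ('e \<Rightarrow> 'm \<Rightarrow> real) \<Rightarrow> real^'m^'e" where
  "ratemat y r = (\<chi> j m. if vdash y m j then r j m else 0)"

definition Bmat :: "('e::finite \<Rightarrow> 'm::finite \<Rightarrow> real) \<Rightarrow> ('e \<Rightarrow> 'm \<Rightarrow> real) \<Rightarrow> ('e \<Rightarrow> 'm \<Rightarrow> real)
    \<Rightarrow> real^('e + 'm)^('e + 'm)" where
  "Bmat y ybar r = (\<chi> a b. case (a, b) of
       (Inl j, Inl j') \<Rightarrow> (if j = j' then -1 else 0)
     | (Inl j, Inr m) \<Rightarrow> ratemat y r $ j $ m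
     | (Inr m, Inl j) \<Rightarrow> stoich y ybar $ m $ j
     | (Inr m, Inr m') \<Rightarrow> 0)"

text \<open>Regularity: det(SR) is a nonzero polynomial in the r_jm, i.e. nonzero at some
real point.\<close>
definition regular :: "('e::finite \<Rightarrow> 'm::finite \<Rightarrow> real) \<Rightarrow> ('e \<Rightarrow> 'm \<Rightarrow> real) \<Rightarrow> bool" where
  "regular y ybar \<longleftrightarrow> (\<exists>r. det (stoich y ybar ** ratemat y r) \<noteq> 0)"

definition zvec :: "('e::finite \<Rightarrow> 'm::finite \<Rightarrow> real) \<Rightarrow> ('e \<Rightarrow> 'm \<Rightarrow> real) \<Rightarrow> ('e \<Rightarrow> 'm \<Rightarrow> real)
    \<Rightarrow> ('e + 'm) \<Rightarrow> real^('e + 'm)" where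
  "zvec y ybar r \<alpha> = - (matrix_inv (Bmat y ybar r) *v axis \<alpha> 1)"

text \<open>Influence: the rational function z^alpha_beta (denominator det B = +-det(SR))
is nonzero, i.e. nonzero at some real point where det(SR) does not vanish.\<close>
definition influences :: "('e::finite \<Rightarrow> 'm::finite \<Rightarrow> real) \<Rightarrow> ('e \<Rightarrow> 'm \<Rightarrow> real)
    \<Rightarrow> ('e + 'm) \<Rightarrow> ('e + 'm) \<Rightarrow> bool" where
  "influences y ybar \<alpha> \<beta> \<longleftrightarrow>
     (\<exists>r. det (stoich y ybar ** ratemat y r) \<noteq> 0 \<and> zvec y ybar r \<alpha> $ \<beta> \<noteq> 0)"

end

theory Submission
  imports Defs
begin

(* If m* is consumed by j* alone, the m*-th column of R is r e_{j*} with r = r_{j*m*}, and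
   r cannot vanish where det(SR) does not, since R would then have a zero column.
   Consequently B (0, e_{m*}/r) = (R e_{m*}/r, 0) = e_{j*}, that is z^{j*} = -e_{m*}/r at every
   admissible rate assignment, which gives (b) and (c). A second metabolite m consumed only
   by j* would likewise force z^{j*} = -e_m/r_{j*m}, so m = m*, which is (a). *)

lemma matrix_inv_mult_vector:
  fixes A :: "'a::comm_semiring_1^'n^'n"
  assumes "invertible A"
  shows "matrix_inv A *v (A *v x) = x"
proof -
  have "matrix_inv A ** A = mat 1"
    using someI_ex[OF assms[unfolded invertible_def]] unfolding matrix_inv_def by blast
  then show ?thesis by (simp add: matrix_vector_mul_assoc)
qed

lemma invertible_mult_ker_right:
  fixes A :: "'a::field^'k^'n" and B :: "'a^'n^'k"
  assumes "invertible (A ** B)" and "B *v x = 0"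
  shows "x = 0"
  using assms matrix_left_invertible_ker[of "A ** B"]
  by (metis invertible_def matrix_vector_mul_assoc matrix_vector_mult_0_right)

lemma sum_UNIV_Plus:
  fixes f :: "'a::finite + 'b::finite \<Rightarrow> 'c::comm_monoid_add"
  shows "sum f UNIV = (\<Sum>j\<in>UNIV. f (Inl j)) + (\<Sum>m\<in>UNIV. f (Inr m))"
  using sum.Plus[of "UNIV::'a set" "UNIV::'b set" f] by (simp add: o_def)

lemma Bmat_mult_vector_Inl:
  "(Bmat y ybar r *v w) $ Inl j = - w $ Inl j + (\<Sum>m\<in>UNIV. ratemat y r $ j $ m * w $ Inr m)"
proof -
  have "(\<Sum>k\<in>UNIV. (if j = k then -1 else 0) * w $ Inl k) =
      (\<Sum>k\<in>UNIV. if j = k then - w $ Inl k else 0)"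
    by (rule sum.cong) auto
  then have "(\<Sum>k\<in>UNIV. (if j = k then -1 else 0) * w $ Inl k) = - w $ Inl j"
    by simp
  then show ?thesis
    unfolding matrix_vector_mult_def Bmat_def by (simp add: sum_UNIV_Plus)
qed

lemma Bmat_mult_vector_Inr:
  "(Bmat y ybar r *v w) $ Inr m = (\<Sum>j\<in>UNIV. stoich y ybar $ m $ j * w $ Inl j)"
  unfolding matrix_vector_mult_def Bmat_def by (simp add: sum_UNIV_Plus)

lemma Bmat_invertible:
  fixes y ybar r :: "'e::finite \<Rightarrow> 'm::finite \<Rightarrow> real"
  assumes "det (stoich y ybar ** ratemat y r) \<noteq> 0"
  shows "invertible (Bmat y ybar r)"
proof -
  have SR: "invertible (stoich y ybar ** ratemat y r)"
    using assms invertible_det_nz by blast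
  have "w = 0" if w: "Bmat y ybar r *v w = 0" for w
  proof -
    define g :: "real^'e" where "g = (\<chi> j. w $ Inl j)"
    define x :: "real^'m" where "x = (\<chi> m. w $ Inr m)"
    have "g $ j = (ratemat y r *v x) $ j" for j
      using arg_cong[OF w, of "\<lambda>v. v $ Inl j", unfolded Bmat_mult_vector_Inl]
      by (simp add: g_def x_def matrix_vector_mult_def)
    then have g: "g = ratemat y r *v x"
      by (simp add: vec_eq_iff)
    have "(stoich y ybar *v g) $ m = 0" for m
      using arg_cong[OF w, of "\<lambda>v. v $ Inr m", unfolded Bmat_mult_vector_Inr]
      by (simp add: g_def matrix_vector_mult_def)
    then have "stoich y ybar *v g = 0"
      by (simp add: vec_eq_iff)
    then have "(stoich y ybar ** ratemat y r) *v x = 0"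
      by (simp add: g flip: matrix_vector_mul_assoc)
    then have "x = 0"
      using SR matrix_left_invertible_ker invertible_def by metis
    with g have "g = 0" by simp
    show "w = 0"
    proof (subst vec_eq_iff, intro allI)
      fix b
      show "w $ b = 0 $ b"
        using \<open>x = 0\<close> \<open>g = 0\<close> by (cases b) (auto simp: vec_eq_iff g_def x_def)
    qed
  qed
  then show ?thesis
    unfolding invertible_left_inverse matrix_left_invertible_ker by blast
qed

lemma ratemat_mult_axis_single_consumer:
  assumes "\<And>j. vdash y m j \<Longrightarrow> j = jstar"
  shows "ratemat y r *v axis m c = axis jstar (c * ratemat y r $ jstar $ m)"
proof -
  have "ratemat y r $ j $ m = 0" if "j \<noteq> jstar" for j
    using assms that by (auto simp: ratemat_def)
  then show ?thesis
    by (auto simp: vec_eq_iff matrix_vector_mult_def axis_def if_distrib cong: if_cong)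
qed

lemma ratemat_single_consumer_nonzero:
  assumes "det (stoich y ybar ** ratemat y r) \<noteq> 0"
    and "\<And>j. vdash y m j \<Longrightarrow> j = jstar"
  shows "ratemat y r $ jstar $ m \<noteq> 0"
proof
  assume "ratemat y r $ jstar $ m = 0"
  then have "ratemat y r *v axis m 1 = 0"
    by (simp add: ratemat_mult_axis_single_consumer[OF assms(2)])
  moreover have "invertible (stoich y ybar ** ratemat y r)"
    using assms(1) invertible_det_nz by blast
  ultimately have "axis m (1::real) = 0"
    using invertible_mult_ker_right by blast
  then show False by simp
qed

lemma Bmat_mult_axis_single_consumer:
  assumes "\<And>j. vdash y m j \<Longrightarrow> j = jstar"
  shows "Bmat y ybar r *v axis (Inr m) c = axis (Inl jstar) (c * ratemat y r $ jstar $ m)"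
proof -
  have Inl: "(Bmat y ybar r *v axis (Inr m) c) $ Inl j = (ratemat y r *v axis m c) $ j" for j
    unfolding Bmat_mult_vector_Inl by (simp add: matrix_vector_mult_def axis_def)
  have Inr: "(Bmat y ybar r *v axis (Inr m) c) $ Inr m' = 0" for m'
    unfolding Bmat_mult_vector_Inr by (simp add: axis_def)
  show ?thesis
  proof (subst vec_eq_iff, intro allI)
    fix b
    show "(Bmat y ybar r *v axis (Inr m) c) $ b = axis (Inl jstar) (c * ratemat y r $ jstar $ m) $ b"
      by (cases b)
        (simp_all add: Inl Inr ratemat_mult_axis_single_consumer[OF assms], simp_all add: axis_def)
  qed
qed

lemma zvec_single_consumer:
  fixes y ybar r :: "'e::finite \<Rightarrow> 'm::finite \<Rightarrow> real"
  assumes det: "det (stoich y ybar ** ratemat y r) \<noteq> 0"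
    and consumer: "\<And>j. vdash y m j \<Longrightarrow> j = jstar"
  shows "zvec y ybar r (Inl jstar) = - axis (Inr m) (1 / ratemat y r $ jstar $ m)"
proof -
  have "Bmat y ybar r *v axis (Inr m) (1 / ratemat y r $ jstar $ m) = axis (Inl jstar) 1"
    using ratemat_single_consumer_nonzero[OF det consumer]
    by (simp add: Bmat_mult_axis_single_consumer[OF consumer])
  then show ?thesis
    unfolding zvec_def by (metis Bmat_invertible[OF det] matrix_inv_mult_vector)
qed

theorem mainTheorem5:
  fixes y ybar :: "'e::finite \<Rightarrow> 'm::finite \<Rightarrow> real"
    and jstar :: 'e and mstar :: 'm
  assumes "\<And>j m. y j m \<ge> 0" and "\<And>j m. ybar j m \<ge> 0"
    and "rank (stoich y ybar) = CARD('m)"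
    and "regular y ybar"
    and "vdash y mstar jstar"
    and "\<And>j. vdash y mstar j \<Longrightarrow> j = jstar"
  shows "(\<forall>m. vdash y m jstar \<and> (\<forall>j. vdash y m j \<longrightarrow> j = jstar) \<longrightarrow> m = mstar)
       \<and> (\<forall>j. \<not> influences y ybar (Inl jstar) (Inl j))
       \<and> influences y ybar (Inl jstar) (Inr mstar)
       \<and> (\<forall>m'. m' \<noteq> mstar \<longrightarrow> \<not> influences y ybar (Inl jstar) (Inr m'))"
proof -
  obtain r0 where r0: "det (stoich y ybar ** ratemat y r0) \<noteq> 0"
    using assms(4) unfolding regular_def by blast
  have z: "zvec y ybar r (Inl jstar) = - axis (Inr mstar) (1 / ratemat y r $ jstar $ mstar)"
    if "det (stoich y ybar ** ratemat y r) \<noteq> 0" for r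
    using that assms(6) by (rule zvec_single_consumer)
  have unique: "m = mstar" if "\<forall>j. vdash y m j \<longrightarrow> j = jstar" for m
  proof -
    from that have consumer: "\<And>j. vdash y m j \<Longrightarrow> j = jstar" by blast
    have "zvec y ybar r0 (Inl jstar) $ Inr m \<noteq> 0"
      using ratemat_single_consumer_nonzero[OF r0 consumer]
      by (simp add: zvec_single_consumer[OF r0 consumer])
    then show ?thesis
      by (simp add: z[OF r0] axis_def split: if_splits)
  qed
  have "influences y ybar (Inl jstar) \<beta> \<longleftrightarrow> \<beta> = Inr mstar" for \<beta>
    unfolding influences_def using r0 ratemat_single_consumer_nonzero[OF r0 assms(6)]
    by (auto simp: z axis_def split: if_splits)
  with unique show ?thesis by blast
qed

end
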